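(* Let $n\ge1$ and radii $R_1,\dots,R_n>0$. For a Kaluza–Klein mode $\underline m=(\underline m_1,\dots,\underline m_n)\in\mathbb{Z}_{\ge0}^n\setminus\{0\}$ set $v_i=2\pi\underline m_i/R_i$ and $|v|^2=\sum_i v_i^2$. In the compactified Lagrangian (see context), the quadratic (coupling-independent) part for the mode $\underline m$ gives: the vector field $A^{(\underline m)a}_\mu$ squared mass $|v|^2$; and the $n$ scalars $A^{(\underline m)a}_{\bar\mu}$ ($\bar\mu=5,\dots,4+n$) the mass matrix $M=|v|^2 I_n-vv^{T}$, which is real symmetric with eigenvalue $0$ of multiplicity one (eigenvector $v$) and eigenvalue $|v|^2$ of multiplicity $n-1$. Consequently, organizing modes into KK towers according to which Fourier indices are nonzero (one tower per nonempty subset of $\{1,\dots,n\}$ for each field type), the compactified theory contains one massless gauge vector field $A^{(0,\dots,0)a}_\mu$, $2^n-1$ KK towers of massive vector fields, $2^n-1$ KK towers of massless (pseudo-Goldstone) scalar fields, and $(2^n-1)(n-1)$ KK towers of massive scalar fields, each massive field of mode $\underline m$ having squared mass $\sum_i(2\pi\underline m_i/R_i)^2$.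
   Context: Setting: pure $SU(N)$ Yang–Mills theory on $\mathcal{M}^4\times(S^1/Z_2)^n$ with Lagrangian $-\tfrac14\mathcal{F}^a_{MN}\mathcal{F}^{MN}_a$, $\mathcal{F}^a_{MN}=\partial_M\mathcal{A}^a_N-\partial_N\mathcal{A}^a_M+g_mf^{abc}\mathcal{A}^b_M\mathcal{A}^c_N$, fields periodic in $y^i$ with period $R_i$, $\mathcal{A}_\mu$ even and $\mathcal{A}_{\bar\mu}$ odd under $y\to-y$, expanded as $\mathcal{A}^a_\mu=P^{-1/2}A^{(0)a}_\mu+(2/P)^{1/2}\sum'A^{(\underline m)a}_\mu\cos\theta_{\underline m}$, $\mathcal{A}^a_{\bar\mu}=(2/P)^{1/2}\sum'A^{(\underline m)a}_{\bar\mu}\sin\theta_{\underline m}$ with $\theta_{\underline m}=2\pi\sum_i\underline m_iy^i/R_i$, $P=\prod R_i$, $\sum'$ over $\mathbb{Z}_{\ge0}^n\setminus\{0\}$. The compactified Lagrangian is the integral of the Lagrangian over $y\in\prod_i[0,R_i]$, a function of the four-dimensional fields $A^{(0)a}_\mu$, $A^{(\underline m)a}_\mu$, $A^{(\underline m)a}_{\bar\mu}$. Extra dimensions are spacelike. Massless scalars are called pseudo-Goldstone bosons. *)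

theory Defs
  imports "HOL-Analysis.Analysis"
begin

text \<open>Extra dimensions are indexed by a finite type 'n (so n = CARD('n) \<ge> 1).
  Points of the torus box: y :: real^'n; radii R :: real^'n; KK modes m :: nat^'n
  (elements of Z_{\<ge>0}^n).\<close>

definition theta :: "real^'n \<Rightarrow> nat^'n \<Rightarrow> real^'n \<Rightarrow> real" where
  "theta R m y = 2 * pi * (\<Sum>i\<in>UNIV. real (m$i) * y$i / R$i)"

definition vol :: "real^'n \<Rightarrow> real" where
  "vol R = (\<Prod>i\<in>UNIV. R$i)"

definition kk_v :: "real^'n \<Rightarrow> nat^'n \<Rightarrow> real^'n" where
  "kk_v R m = (\<chi> i. 2 * pi * real (m$i) / R$i)"

definition sqnorm :: "real^'n \<Rightarrow> real" where
  "sqnorm v = (\<Sum>i\<in>UNIV. (v$i)^2)"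

definition mass_matrix :: "real^'n \<Rightarrow> real^'n^'n" where
  "mass_matrix v = (\<chi> i j. sqnorm v * (if i = j then 1 else 0) - v$i * v$j)"

definition eigenspace :: "real^'n^'n \<Rightarrow> real \<Rightarrow> (real^'n) set" where
  "eigenspace M lam = {x. M *v x = lam *\<^sub>R x}"

definition pd :: "'n::finite \<Rightarrow> (real^'n \<Rightarrow> real) \<Rightarrow> real^'n \<Rightarrow> real" where
  "pd i f y = deriv (\<lambda>t. f (\<chi> k. if k = i then t else y$k)) (y$i)"

text \<open>Odd (extra-dimensional) field component A_j, expanded in the (finitely many)
  modes of S with 4D values a m $ j, at a fixed 4D point and fixed gauge index.\<close>
definition odd_field :: "real^'n \<Rightarrow> (nat^'n) set \<Rightarrow> (nat^'n \<Rightarrow> real^'n) \<Rightarrow> 'n \<Rightarrow> real^'n \<Rightarrow> real" where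
  "odd_field R S a j y = sqrt (2 / vol R) * (\<Sum>m\<in>S. (a m)$j * sin (theta R m y))"

text \<open>Even field component A_mu (fixed mu and gauge index): zero mode b0 plus modes of S.\<close>
definition even_field :: "real^'n \<Rightarrow> real \<Rightarrow> (nat^'n) set \<Rightarrow> (nat^'n \<Rightarrow> real) \<Rightarrow> real^'n \<Rightarrow> real" where
  "even_field R b0 S b y = b0 / sqrt (vol R) + sqrt (2 / vol R) * (\<Sum>m\<in>S. b m * cos (theta R m y))"

text \<open>Coupling-independent, 4D-derivative-free quadratic part of the compactified Lagrangian:
  scalar part  -1/4 F_{mubar nubar} F^{mubar nubar} (abelian part, extra dims spacelike),
  vector mass part coming from -1/2 F_{mu nubar} F^{mu nubar} \<supseteq> +1/2 d_nubar A_mu d_nubar A^mu,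
  integrated over the box prod_i [0,R_i].\<close>
definition scalar_quad :: "real^'n \<Rightarrow> (nat^'n) set \<Rightarrow> (nat^'n \<Rightarrow> real^'n) \<Rightarrow> real" where
  "scalar_quad R S a = integral (cbox 0 R)
     (\<lambda>y. -(1/4) * (\<Sum>i\<in>UNIV. \<Sum>j\<in>UNIV.
        (pd i (odd_field R S a j) y - pd j (odd_field R S a i) y)^2))"

definition vector_quad :: "real^'n \<Rightarrow> real \<Rightarrow> (nat^'n) set \<Rightarrow> (nat^'n \<Rightarrow> real) \<Rightarrow> real" where
  "vector_quad R b0 S b = integral (cbox 0 R)
     (\<lambda>y. (1/2) * (\<Sum>i\<in>UNIV. (pd i (even_field R b0 S b) y)^2))"

definition tower :: "'n set \<Rightarrow> (nat^'n) set" where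
  "tower T = {m. {i. m$i \<noteq> 0} = T}"

end

(* The torus modes cos theta_m and sin theta_m (m ~= 0) are orthogonal on the box prod_i [0, R_i],
   with squared norm P/2, because the integral of cos (theta_k + s) over the box vanishes for every
   nonzero integer wave vector k. Differentiating the mode expansions term by term therefore
   diagonalises both quadratic forms: a vector mode acquires the mass |v|^2 from d_i theta_m = v_i,
   and the field strength of a scalar mode has components v_i a_j - v_j a_i, whose squared norm is,
   by Lagrange's identity, 2 a . (|v|^2 I - v v^T) a. The mass matrix annihilates v and acts as
   |v|^2 on the hyperplane orthogonal to v; in an orthonormal basis starting with v/|v| it is
   diagonal, which gives its characteristic polynomial. *)

theory Submission
  imports Defs
begin

section \<open>The mass matrix\<close>

lemma sqnorm_eq_inner: "sqnorm v = v \<bullet> v"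
  by (simp add: sqnorm_def inner_vec_def power2_eq_square)

lemma sqnorm_pos_iff: "0 < sqnorm v \<longleftrightarrow> v \<noteq> 0"
  by (simp add: sqnorm_eq_inner)

lemma mass_matrix_mult: "mass_matrix v *v x = sqnorm v *\<^sub>R x - (v \<bullet> x) *\<^sub>R v"
proof -
  have "(mass_matrix v *v x) $ i = (\<Sum>j\<in>UNIV. (if i = j then sqnorm v * x$j else 0) - v$i * (v$j * x$j))"
    for i
    unfolding mass_matrix_def matrix_vector_mult_def vec_lambda_beta
    by (rule sum.cong) (auto simp: algebra_simps)
  then show ?thesis
    by (simp add: vec_eq_iff inner_vec_def sum_subtractf sum_distrib_left mult.commute)
qed

lemma transpose_mass_matrix: "transpose (mass_matrix v) = mass_matrix v"
  by (simp add: transpose_def mass_matrix_def vec_eq_iff mult.commute)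

lemma mass_matrix_mult_self: "mass_matrix v *v v = 0"
  by (simp add: mass_matrix_mult sqnorm_eq_inner)

lemma eigenspace_mass_matrix_0:
  assumes "v \<noteq> 0"
  shows "eigenspace (mass_matrix v) 0 = span {v}"
proof -
  have "x \<in> eigenspace (mass_matrix v) 0 \<longleftrightarrow> (\<exists>c. x = c *\<^sub>R v)" for x
  proof
    assume "x \<in> eigenspace (mass_matrix v) 0"
    then have eq: "sqnorm v *\<^sub>R x = (v \<bullet> x) *\<^sub>R v"
      by (simp add: eigenspace_def mass_matrix_mult)
    have "x = (1 / sqnorm v) *\<^sub>R (sqnorm v *\<^sub>R x)"
      using assms by (simp add: sqnorm_eq_inner)
    also have "\<dots> = ((v \<bullet> x) / sqnorm v) *\<^sub>R v"
      by (simp add: eq)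
    finally show "\<exists>c. x = c *\<^sub>R v" ..
  qed (auto simp: eigenspace_def mass_matrix_mult sqnorm_eq_inner)
  then show ?thesis
    by (auto simp: span_singleton)
qed

lemma eigenspace_mass_matrix_sqnorm:
  assumes "v \<noteq> 0"
  shows "eigenspace (mass_matrix v) (sqnorm v) = {x. v \<bullet> x = 0}"
  using assms by (auto simp: eigenspace_def mass_matrix_mult)

lemma dim_eigenspace_mass_matrix_0:
  assumes "v \<noteq> 0"
  shows "dim (eigenspace (mass_matrix v) 0) = 1"
  using assms by (simp add: eigenspace_mass_matrix_0 dim_span dim_eq_card_independent)

lemma dim_eigenspace_mass_matrix_sqnorm:
  assumes "v \<noteq> 0"
  shows "dim (eigenspace (mass_matrix (v::real^'n)) (sqnorm v)) = CARD('n) - 1"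
  using assms by (simp add: eigenspace_mass_matrix_sqnorm dim_hyperplane)

lemma det_conj_orthogonal_matrix:
  fixes A X :: "real^'n^'n"
  assumes "orthogonal_matrix A"
  shows "det (transpose A ** X ** A) = det X"
proof -
  have "det A * det A = 1"
    using det_orthogonal_matrix[OF assms] by auto
  then show ?thesis
    by (simp add: det_mul det_transpose)
qed

lemma mass_matrix_orthogonal_diagonalization:
  fixes v :: "real^'n"
  assumes A: "orthogonal_matrix A" "A *v axis k 1 = v /\<^sub>R norm v" and "v \<noteq> 0"
  shows "transpose A ** mass_matrix v ** A = (\<chi> i j. if i = j \<and> i \<noteq> k then sqnorm v else 0)"
    (is "_ = ?D")
proof -
  have AtA: "transpose A ** A = mat 1"
    using A(1) by (simp add: orthogonal_matrix_def)
  have Atv: "transpose A *v v = norm v *\<^sub>R axis k 1"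
  proof -
    have "v = norm v *\<^sub>R (A *v axis k 1)"
      using A(2) \<open>v \<noteq> 0\<close> by simp
    then show ?thesis
      by (metis AtA matrix_vector_mul_assoc matrix_vector_mul_lid matrix_vector_mult_scaleR)
  qed
  have AtAx: "transpose A *v (A *v x) = x" for x
    by (simp add: matrix_vector_mul_assoc AtA)
  have "(transpose A ** mass_matrix v ** A) *v x = ?D *v x" for x
  proof -
    have "v \<bullet> (A *v x) = (transpose A *v v) \<bullet> x"
      by (simp add: dot_lmul_matrix)
    also have "\<dots> = norm v * x $ k"
      unfolding Atv by (simp add: inner_axis')
    finally have "v \<bullet> (A *v x) = norm v * x $ k" .
    then have "(transpose A ** mass_matrix v ** A) *v x = sqnorm v *\<^sub>R x - (sqnorm v * x $ k) *\<^sub>R axis k 1"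
      by (simp add: mass_matrix_mult matrix_vector_mul_assoc[symmetric] matrix_vector_mult_diff_distrib
          matrix_vector_mult_scaleR AtAx[simplified] Atv[simplified] sqnorm_eq_inner power2_eq_square flip: power2_norm_eq_inner)
    also have "\<dots> = ?D *v x"
      by (auto simp: vec_eq_iff axis_def matrix_vector_mult_def if_distrib[of "\<lambda>c. c * _"] cong: if_cong)
    finally show ?thesis .
  qed
  then show ?thesis
    by (simp add: matrix_eq)
qed

lemma charpoly_mass_matrix:
  fixes v :: "real^'n"
  assumes "v \<noteq> 0"
  shows "det (t *\<^sub>R mat 1 - mass_matrix v) = t * (t - sqnorm v) ^ (CARD('n) - 1)"
proof -
  obtain k :: 'n where True by blast
  obtain A where A: "orthogonal_matrix A" "A *v axis k 1 = v /\<^sub>R norm v"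
    using orthogonal_matrix_exists_basis[of "v /\<^sub>R norm v" k] assms by auto
  have "det (t *\<^sub>R mat 1 - mass_matrix v) = det (transpose A ** (t *\<^sub>R mat 1 - mass_matrix v) ** A)"
    by (rule det_conj_orthogonal_matrix[OF A(1), symmetric])
  also have "transpose A ** (t *\<^sub>R mat 1 - mass_matrix v) ** A
      = t *\<^sub>R mat 1 - transpose A ** mass_matrix v ** A"
    using A(1) unfolding orthogonal_matrix_def
    by (simp add: matrix_eq matrix_vector_mul_assoc[symmetric] matrix_vector_mult_diff_rdistrib
        matrix_vector_mult_diff_distrib matrix_vector_mult_scaleR flip: scaleR_matrix_vector_assoc
        del: transpose_matrix_vector)
  also have "\<dots> = (\<chi> i j. if i = j then (if i = k then t else t - sqnorm v) else 0)"
    by (simp add: mass_matrix_orthogonal_diagonalization[OF A assms] vec_eq_iff mat_def)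
  also have "det (\<chi> i j. if i = j then (if i = k then t else t - sqnorm v) else 0)
      = (\<Prod>i\<in>UNIV. if i = k then t else t - sqnorm v)"
    by (simp add: det_diagonal)
  also have "\<dots> = t * (t - sqnorm v) ^ (CARD('n) - 1)"
    by (simp add: prod.If_cases Compl_eq_Diff_UNIV card_Diff_singleton)
  finally show ?thesis .
qed

section \<open>Orthogonality of the torus modes\<close>

lemma integral_split_cart:
  fixes f :: "real^'n \<Rightarrow> 'b::banach"
  assumes "f integrable_on cbox a b" and "a$j \<le> c" "c \<le> b$j"
  shows "integral (cbox a b) f
    = integral (cbox a (\<chi> i. if i = j then c else b$i)) f
      + integral (cbox (\<chi> i. if i = j then c else a$i) b) f"
proof -
  have coord: "x \<bullet> axis j 1 = x $ j" for x :: "real^'n"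
    by (simp add: inner_axis)
  have "integral (cbox a b) f = integral (cbox a b \<inter> {x. x \<bullet> axis j 1 \<le> c}) f
      + integral (cbox a b \<inter> {x. x \<bullet> axis j 1 \<ge> c}) f"
    by (rule integral_split[OF assms(1)]) simp
  moreover have "(\<chi> i. if i = j then min (b$j) c else b$i) = (\<chi> i. if i = j then c else b$i)"
    "(\<chi> i. if i = j then max (a$j) c else a$i) = (\<chi> i. if i = j then c else a$i)"
    using assms(2,3) by (simp_all add: vec_eq_iff)
  ultimately show ?thesis
    by (simp add: coord interval_split_cart[unfolded interval_cbox_cart])
qed

lemma integral_shift_periodic_cart:
  fixes f :: "real^'n \<Rightarrow> 'b::banach"
  assumes cont: "continuous_on UNIV f"
    and periodic: "\<And>y. f (y + (b$j - a$j) *\<^sub>R axis j 1) = f y"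
    and "0 \<le> c" "c \<le> b$j - a$j"
  shows "integral (cbox a b) (\<lambda>y. f (y + c *\<^sub>R axis j 1)) = integral (cbox a b) f"
proof -
  define e :: "real^'n" where "e = axis j 1"
  define p where "p = b$j - a$j"
  define b' where "b' = (\<chi> i. if i = j then a$j + c else b$i)"
  have int: "f integrable_on cbox u w" for u w
    using cont by (metis continuous_on_subset integrable_continuous subset_UNIV)
  have shift: "integral (cbox u w) (\<lambda>y. f (y + d)) = integral (cbox (u + d) (w + d)) f" for u w d
    using integral_shift_cbox_plus[of u w f d] by (simp add: o_def add.commute)
  have "integral (cbox a b) (\<lambda>y. f (y + c *\<^sub>R e)) = integral (cbox (a + c *\<^sub>R e) (b + c *\<^sub>R e)) f"
    by (rule shift)
  also have "\<dots> = integral (cbox (a + c *\<^sub>R e) b) f + integral (cbox (a + p *\<^sub>R e) (b' + p *\<^sub>R e)) f"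
  proof -
    have "(\<chi> i. if i = j then b$j else (b + c *\<^sub>R e)$i) = b"
      "(\<chi> i. if i = j then b$j else (a + c *\<^sub>R e)$i) = a + p *\<^sub>R e"
      "b + c *\<^sub>R e = b' + p *\<^sub>R e"
      by (auto simp: vec_eq_iff e_def p_def b'_def axis_def)
    moreover have "(a + c *\<^sub>R e)$j \<le> b$j" "b$j \<le> (b + c *\<^sub>R e)$j"
      using assms(3,4) by (simp_all add: e_def)
    ultimately show ?thesis
      using integral_split_cart[OF int, of "a + c *\<^sub>R e" j "b$j" "b + c *\<^sub>R e"] by simp
  qed
  also have "integral (cbox (a + p *\<^sub>R e) (b' + p *\<^sub>R e)) f = integral (cbox a b') f"
    using shift[of a b' "p *\<^sub>R e"] periodic by (simp add: e_def p_def)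
  also have "integral (cbox (a + c *\<^sub>R e) b) f + integral (cbox a b') f = integral (cbox a b) f"
  proof -
    have "(\<chi> i. if i = j then a$j + c else a$i) = a + c *\<^sub>R e"
      by (auto simp: vec_eq_iff e_def axis_def)
    then show ?thesis
      using integral_split_cart[OF int, of a j "a$j + c" b] assms(3,4) by (simp add: b'_def)
  qed
  finally show ?thesis
    by (simp add: e_def)
qed

text \<open>Integer wave vectors are needed because products of modes involve the phases
  theta_m - theta_m'.\<close>

definition phase :: "real^'n \<Rightarrow> ('n \<Rightarrow> int) \<Rightarrow> real^'n \<Rightarrow> real" where
  "phase R k y = 2 * pi * (\<Sum>i\<in>UNIV. real_of_int (k i) * y$i / R$i)"

lemma theta_eq_phase: "theta R m = phase R (\<lambda>i. int (m$i))"
  by (simp add: fun_eq_iff theta_def phase_def)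

lemma phase_add: "phase R k y + phase R k' y = phase R (\<lambda>i. k i + k' i) y"
  by (simp add: phase_def algebra_simps sum.distrib add_divide_distrib)

lemma phase_diff: "phase R k y - phase R k' y = phase R (\<lambda>i. k i - k' i) y"
  by (simp add: phase_def algebra_simps sum_subtractf diff_divide_distrib)

lemma phase_add_axis:
  "phase R k (y + d *\<^sub>R axis j 1) = phase R k y + 2 * pi * (real_of_int (k j) * d / R$j)"
proof -
  have "(\<Sum>i\<in>UNIV. real_of_int (k i) * (y + d *\<^sub>R axis j 1)$i / R$i)
      = (\<Sum>i\<in>UNIV. real_of_int (k i) * y$i / R$i + (if i = j then real_of_int (k j) * d / R$j else 0))"
    by (rule sum.cong) (auto simp: axis_def algebra_simps add_divide_distrib)
  then show ?thesis
    by (simp add: phase_def sum.distrib algebra_simps)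
qed

lemma continuous_on_cos_phase: "continuous_on UNIV (\<lambda>y. cos (phase R k y + s))"
proof -
  have "phase R k = (\<lambda>y. 2 * pi * (\<Sum>i\<in>UNIV. (real_of_int (k i) / R$i) * y$i))"
    by (simp add: fun_eq_iff phase_def)
  then show ?thesis
    by (simp only:) (intro continuous_intros)
qed

lemma cos_add_2pi_int: "cos (z + 2 * pi * of_int n) = cos (z :: real)"
  by (simp add: cos_add)

lemma cos_add_pi_sgn: "x \<noteq> 0 \<Longrightarrow> cos (z + pi * sgn x) = - cos (z :: real)"
  by (cases "x > 0") (simp_all add: cos_add)

text \<open>Translating by half a period in a direction j with k j \<noteq> 0 negates the integrand,
  while periodicity makes the integral invariant under that translation.\<close>

lemma integral_cos_phase_eq_0:
  assumes Rpos: "\<forall>i. R$i > 0" and "k j \<noteq> 0"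
  shows "integral (cbox 0 R) (\<lambda>y. cos (phase R k y + s)) = 0"
proof -
  define f where "f = (\<lambda>y. cos (phase R k y + s))"
  define c where "c = R$j / (2 * \<bar>real_of_int (k j)\<bar>)"
  have Rj: "R$j > 0"
    using Rpos by simp
  have kj: "\<bar>real_of_int (k j)\<bar> \<ge> 1"
    using \<open>k j \<noteq> 0\<close> by linarith
  have periodic: "f (y + R$j *\<^sub>R axis j 1) = f y" for y
  proof -
    have "f (y + R$j *\<^sub>R axis j 1) = cos ((phase R k y + s) + 2 * pi * real_of_int (k j))"
      using Rj by (simp add: f_def phase_add_axis algebra_simps)
    then show ?thesis
      by (simp only: cos_add_2pi_int f_def)
  qed
  have c: "0 \<le> c" "c \<le> R$j"
    using Rj kj by (auto simp: c_def field_simps)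
  have "2 * pi * (real_of_int (k j) * c / R$j) = pi * sgn (real_of_int (k j))"
    using Rj \<open>k j \<noteq> 0\<close> by (simp add: c_def real_sgn_eq)
  then have shifted: "phase R k (y + c *\<^sub>R axis j 1) + s = (phase R k y + s) + pi * sgn (real_of_int (k j))"
    for y by (simp add: phase_add_axis)
  have half_period: "f (y + c *\<^sub>R axis j 1) = - f y" for y
    using \<open>k j \<noteq> 0\<close> by (simp only: f_def shifted cos_add_pi_sgn of_int_eq_0_iff not_False_eq_True)
  have "continuous_on UNIV f"
    unfolding f_def by (rule continuous_on_cos_phase)
  then have "integral (cbox 0 R) f = integral (cbox 0 R) (\<lambda>y. f (y + c *\<^sub>R axis j 1))"
    using integral_shift_periodic_cart[where f = f and a = 0 and b = R and j = j and c = c] periodic c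
    by simp
  also have "\<dots> = - integral (cbox 0 R) f"
    by (simp add: half_period integral_neg)
  finally show ?thesis
    by (simp add: f_def)
qed

lemma has_integral_cos_phase:
  assumes Rpos: "\<forall>i. R$i > 0"
  shows "((\<lambda>y. cos (phase R k y + s)) has_integral (if k = (\<lambda>_. 0) then cos s * vol R else 0))
    (cbox 0 R)"
proof (cases "k = (\<lambda>_. 0)")
  case True
  have "0 \<in> cbox 0 R"
    using Rpos by (simp add: mem_box_cart less_imp_le)
  then have "cbox 0 R \<noteq> {}"
    by blast
  then have "measure lborel (cbox 0 R) = vol R"
    by (simp add: content_cbox_cart vol_def)
  moreover have "phase R k y = 0" for y
    using True by (simp add: phase_def)
  ultimately show ?thesis
    using True has_integral_const[of "cos s" 0 R] by (simp add: mult.commute)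
next
  case False
  then obtain j where "k j \<noteq> 0"
    by auto
  have "(\<lambda>y. cos (phase R k y + s)) integrable_on cbox 0 R"
    by (rule integrable_continuous, rule continuous_on_subset[OF continuous_on_cos_phase]) simp
  then show ?thesis
    using integral_cos_phase_eq_0[where k = k and j = j, OF Rpos \<open>k j \<noteq> 0\<close>] False
    by (simp add: has_integral_integrable_integral)
qed

lemma has_integral_cos_theta_diff:
  assumes "\<forall>i. R$i > 0"
  shows "((\<lambda>y. cos (theta R m y - theta R m' y)) has_integral (if m = m' then vol R else 0)) (cbox 0 R)"
proof -
  define k where "k = (\<lambda>i. int (m$i) - int (m'$i))"
  have "k = (\<lambda>_. 0) \<longleftrightarrow> m = m'"
    by (auto simp: k_def fun_eq_iff vec_eq_iff)
  moreover have "cos (theta R m y - theta R m' y) = cos (phase R k y + 0)" for y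
    by (simp add: k_def theta_eq_phase phase_diff)
  ultimately show ?thesis
    using has_integral_cos_phase[OF assms, of k 0] by (simp only: cos_zero mult_1_left)
qed

lemma has_integral_cos_theta_add:
  assumes "\<forall>i. R$i > 0" and "m \<noteq> 0"
  shows "((\<lambda>y. cos (theta R m y + theta R m' y)) has_integral 0) (cbox 0 R)"
proof -
  define k where "k = (\<lambda>i. int (m$i) + int (m'$i))"
  obtain i where "m$i \<noteq> 0"
    using \<open>m \<noteq> 0\<close> by (auto simp: vec_eq_iff)
  then have "k \<noteq> (\<lambda>_. 0)"
    by (metis k_def add_eq_0_iff_both_eq_0 of_nat_add of_nat_eq_0_iff)
  moreover have "cos (theta R m y + theta R m' y) = cos (phase R k y + 0)" for y
    by (simp add: k_def theta_eq_phase phase_add)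
  ultimately show ?thesis
    using has_integral_cos_phase[OF assms(1), of k 0] by (simp only: if_False)
qed

lemma has_integral_cos_theta_mult:
  assumes "\<forall>i. R$i > 0" and "m \<noteq> 0"
  shows "((\<lambda>y. cos (theta R m y) * cos (theta R m' y)) has_integral (if m = m' then vol R / 2 else 0))
    (cbox 0 R)"
proof -
  have "((\<lambda>y. (cos (theta R m y - theta R m' y) + cos (theta R m y + theta R m' y)) / 2)
      has_integral ((if m = m' then vol R else 0) + 0) / 2) (cbox 0 R)"
    by (intro has_integral_divide has_integral_add has_integral_cos_theta_diff
        has_integral_cos_theta_add assms)
  moreover have "((if m = m' then vol R else 0) + 0) / 2 = (if m = m' then vol R / 2 else 0)"
    by simp
  ultimately show ?thesis
    by (simp only: cos_times_cos)
qed

lemma has_integral_sin_theta_mult: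
  assumes "\<forall>i. R$i > 0" and "m \<noteq> 0"
  shows "((\<lambda>y. sin (theta R m y) * sin (theta R m' y)) has_integral (if m = m' then vol R / 2 else 0))
    (cbox 0 R)"
proof -
  have "((\<lambda>y. (cos (theta R m y - theta R m' y) - cos (theta R m y + theta R m' y)) / 2)
      has_integral ((if m = m' then vol R else 0) - 0) / 2) (cbox 0 R)"
    by (intro has_integral_divide has_integral_diff has_integral_cos_theta_diff
        has_integral_cos_theta_add assms)
  moreover have "((if m = m' then vol R else 0) - 0) / 2 = (if m = m' then vol R / 2 else 0)"
    by simp
  ultimately show ?thesis
    by (simp only: sin_times_sin)
qed

lemma has_integral_power2_sum_orthogonal:
  fixes g :: "'a \<Rightarrow> 'b::euclidean_space \<Rightarrow> real"
  assumes "finite S"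
    and orth: "\<And>m m'. m \<in> S \<Longrightarrow> m' \<in> S \<Longrightarrow>
      ((\<lambda>y. g m y * g m' y) has_integral (if m = m' then N else 0)) D"
  shows "((\<lambda>y. (\<Sum>m\<in>S. c m * g m y)^2) has_integral (N * (\<Sum>m\<in>S. (c m)^2))) D"
proof -
  have "(\<Sum>m\<in>S. c m * g m y)^2 = (\<Sum>m\<in>S. \<Sum>m'\<in>S. (c m * c m') * (g m y * g m' y))" for y
    by (simp add: power2_eq_square sum_product algebra_simps)
  moreover have "((\<lambda>y. \<Sum>m\<in>S. \<Sum>m'\<in>S. (c m * c m') * (g m y * g m' y)) has_integral
      (\<Sum>m\<in>S. \<Sum>m'\<in>S. (c m * c m') * (if m = m' then N else 0))) D"
    by (intro has_integral_sum \<open>finite S\<close> has_integral_mult_right orth)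
  moreover have "(\<Sum>m\<in>S. \<Sum>m'\<in>S. (c m * c m') * (if m = m' then N else 0)) = N * (\<Sum>m\<in>S. (c m)^2)"
    using \<open>finite S\<close> by (simp add: if_distrib[of "\<lambda>x. _ * x"] sum.delta sum_distrib_left
        power2_eq_square mult.commute cong: if_cong)
  ultimately show ?thesis
    by simp
qed

lemma has_integral_sum_power2_sum_orthogonal:
  fixes g :: "'a \<Rightarrow> 'b::euclidean_space \<Rightarrow> real"
  assumes "finite I" "finite S"
    and "\<And>m m'. m \<in> S \<Longrightarrow> m' \<in> S \<Longrightarrow>
      ((\<lambda>y. g m y * g m' y) has_integral (if m = m' then N else 0)) D"
  shows "((\<lambda>y. \<Sum>p\<in>I. (\<Sum>m\<in>S. c p m * g m y)^2) has_integral (N * (\<Sum>m\<in>S. \<Sum>p\<in>I. (c p m)^2))) D"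
proof -
  have "((\<lambda>y. \<Sum>p\<in>I. (\<Sum>m\<in>S. c p m * g m y)^2) has_integral (\<Sum>p\<in>I. N * (\<Sum>m\<in>S. (c p m)^2))) D"
    by (intro has_integral_sum assms has_integral_power2_sum_orthogonal)
  then show ?thesis
    by (simp add: sum_distrib_left sum.swap[of _ I S])
qed

section \<open>The quadratic part of the compactified Lagrangian\<close>

lemma vol_pos: "\<forall>i. R$i > 0 \<Longrightarrow> vol R > 0"
  by (simp add: vol_def prod_pos)

lemma vec_lambda_update_self: "(\<chi> k. if k = i then y$i else y$k) = y"
  by (simp add: vec_eq_iff)

lemma has_real_derivative_theta_coordinate:
  "((\<lambda>t. theta R m (\<chi> k. if k = i then t else y$k)) has_real_derivative kk_v R m $ i) (at t)"
proof -
  have "(\<chi> k. if k = i then t else y$k) = y + (t - y$i) *\<^sub>R axis i 1" for t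
    by (simp add: vec_eq_iff axis_def)
  then have "theta R m (\<chi> k. if k = i then t else y$k) = theta R m y + kk_v R m $ i * (t - y$i)" for t
    by (simp add: theta_eq_phase phase_add_axis kk_v_def)
  then show ?thesis
    by (auto intro!: derivative_eq_intros)
qed

lemma pd_even_field:
  "pd i (even_field R b0 S b) y = - sqrt (2 / vol R) * (\<Sum>m\<in>S. (b m * kk_v R m $ i) * sin (theta R m y))"
proof -
  have "((\<lambda>t. even_field R b0 S b (\<chi> k. if k = i then t else y$k)) has_real_derivative
      0 + sqrt (2 / vol R) * (\<Sum>m\<in>S. b m * (- sin (theta R m (\<chi> k. if k = i then t else y$k)) * kk_v R m $ i)))
      (at t)" for t
    unfolding even_field_def
    by (intro DERIV_add DERIV_const DERIV_cmult DERIV_sum DERIV_fun_cos has_real_derivative_theta_coordinate)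
  from DERIV_imp_deriv[OF this[of "y$i"]] show ?thesis
    by (simp add: pd_def vec_lambda_update_self sum_negf mult_ac)
qed

lemma pd_odd_field:
  "pd i (odd_field R S a j) y = sqrt (2 / vol R) * (\<Sum>m\<in>S. ((a m)$j * kk_v R m $ i) * cos (theta R m y))"
proof -
  have "((\<lambda>t. odd_field R S a j (\<chi> k. if k = i then t else y$k)) has_real_derivative
      sqrt (2 / vol R) * (\<Sum>m\<in>S. (a m)$j * (cos (theta R m (\<chi> k. if k = i then t else y$k)) * kk_v R m $ i)))
      (at t)" for t
    unfolding odd_field_def
    by (intro DERIV_cmult DERIV_sum DERIV_fun_sin has_real_derivative_theta_coordinate)
  from DERIV_imp_deriv[OF this[of "y$i"]] show ?thesis
    by (simp add: pd_def vec_lambda_update_self mult_ac)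
qed

lemma vector_quad_eq:
  assumes Rpos: "\<forall>i. R$i > 0" and "finite S" "0 \<notin> S"
  shows "vector_quad R b0 S b = (1/2) * (\<Sum>m\<in>S. sqnorm (kk_v R m) * (b m)^2)"
proof -
  define u where "u i m = b m * kk_v R m $ i" for i m
  have vol: "vol R > 0"
    using Rpos by (rule vol_pos)
  have "(pd i (even_field R b0 S b) y)^2 = (2 / vol R) * (\<Sum>m\<in>S. u i m * sin (theta R m y))^2" for i y
    using vol unfolding pd_even_field u_def power_mult_distrib by simp
  then have integrand: "(\<lambda>y. (1/2) * (\<Sum>i\<in>UNIV. (pd i (even_field R b0 S b) y)^2))
      = (\<lambda>y. (1 / vol R) * (\<Sum>i\<in>UNIV. (\<Sum>m\<in>S. u i m * sin (theta R m y))^2))"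
    by (simp add: sum_distrib_left)
  have "((\<lambda>y. (1 / vol R) * (\<Sum>i\<in>UNIV. (\<Sum>m\<in>S. u i m * sin (theta R m y))^2)) has_integral
      (1 / vol R) * (vol R / 2 * (\<Sum>m\<in>S. \<Sum>i\<in>UNIV. (u i m)^2))) (cbox 0 R)"
    using \<open>0 \<notin> S\<close>
    by (intro has_integral_mult_right has_integral_sum_power2_sum_orthogonal \<open>finite S\<close> finite_UNIV
        has_integral_sin_theta_mult Rpos) auto
  moreover have "(1 / vol R) * (vol R / 2 * (\<Sum>m\<in>S. \<Sum>i\<in>UNIV. (u i m)^2))
      = (1/2) * (\<Sum>m\<in>S. sqnorm (kk_v R m) * (b m)^2)"
    using vol by (simp add: u_def sqnorm_def power_mult_distrib sum_distrib_left mult_ac)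
  ultimately show ?thesis
    unfolding vector_quad_def integrand by (simp only: integral_unique)
qed

lemma lagrange_identity_cart:
  fixes a v :: "real^'n"
  shows "(\<Sum>i\<in>UNIV. \<Sum>j\<in>UNIV. (a$j * v$i - a$i * v$j)^2) = 2 * ((a \<bullet> a) * (v \<bullet> v) - (a \<bullet> v)^2)"
proof -
  have expand: "(a$j * v$i - a$i * v$j)^2
      = (a$j * a$j) * (v$i * v$i) + (a$i * a$i) * (v$j * v$j) - 2 * ((a$i * v$i) * (a$j * v$j))" for i j
    by (simp add: power2_eq_square algebra_simps)
  have aa_vv: "(\<Sum>i\<in>UNIV. \<Sum>j\<in>UNIV. (a$j * a$j) * (v$i * v$i)) = (v \<bullet> v) * (a \<bullet> a)"
    "(\<Sum>i\<in>UNIV. \<Sum>j\<in>UNIV. (a$i * a$i) * (v$j * v$j)) = (a \<bullet> a) * (v \<bullet> v)"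
    unfolding inner_vec_def inner_real_def sum_product by (simp_all only: mult.commute)
  have av: "(\<Sum>i\<in>UNIV. \<Sum>j\<in>UNIV. (a$i * v$i) * (a$j * v$j)) = (a \<bullet> v) * (a \<bullet> v)"
    unfolding inner_vec_def inner_real_def sum_product ..
  have "(\<Sum>i\<in>UNIV. \<Sum>j\<in>UNIV. (a$j * v$i - a$i * v$j)^2)
      = (\<Sum>i\<in>UNIV. \<Sum>j\<in>UNIV. (a$j * a$j) * (v$i * v$i))
        + (\<Sum>i\<in>UNIV. \<Sum>j\<in>UNIV. (a$i * a$i) * (v$j * v$j))
        - 2 * (\<Sum>i\<in>UNIV. \<Sum>j\<in>UNIV. (a$i * v$i) * (a$j * v$j))"
    by (simp only: expand sum.distrib sum_subtractf sum_distrib_left)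
  then show ?thesis
    unfolding aa_vv av by (simp add: power2_eq_square)
qed

lemma inner_mass_matrix: "a \<bullet> (mass_matrix v *v a) = sqnorm v * (a \<bullet> a) - (v \<bullet> a)^2"
  by (simp add: mass_matrix_mult sqnorm_eq_inner inner_diff_right inner_commute power2_eq_square)

lemma scalar_quad_eq:
  fixes a :: "nat^'n \<Rightarrow> real^'n"
  assumes Rpos: "\<forall>i. R$i > 0" and "finite S" "0 \<notin> S"
  shows "scalar_quad R S a = -(1/2) * (\<Sum>m\<in>S. a m \<bullet> (mass_matrix (kk_v R m) *v a m))"
proof -
  \<comment> \<open>u (i, j) m is the Fourier coefficient of the field strength F_ij of the mode m\<close>
  define u where "u p m = (a m)$(snd p) * kk_v R m $ (fst p) - (a m)$(fst p) * kk_v R m $ (snd p)"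
    for p :: "'n \<times> 'n" and m
  have vol: "vol R > 0"
    using Rpos by (rule vol_pos)
  have pairs: "(\<Sum>i\<in>UNIV. \<Sum>j\<in>UNIV. F (i, j)) = (\<Sum>p\<in>UNIV. F p)" for F :: "'n \<times> 'n \<Rightarrow> real"
    using sum.cartesian_product[of "\<lambda>i j. F (i, j)" UNIV UNIV] by simp
  have "pd i (odd_field R S a j) y - pd j (odd_field R S a i) y
      = sqrt (2 / vol R) * (\<Sum>m\<in>S. u (i, j) m * cos (theta R m y))" for i j y
    by (simp add: pd_odd_field u_def algebra_simps sum_subtractf sum_distrib_left)
  then have "(pd i (odd_field R S a j) y - pd j (odd_field R S a i) y)^2
      = (2 / vol R) * (\<Sum>m\<in>S. u (i, j) m * cos (theta R m y))^2" for i j y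
    using vol by (simp add: power_mult_distrib)
  then have "(\<Sum>i\<in>UNIV. \<Sum>j\<in>UNIV. (pd i (odd_field R S a j) y - pd j (odd_field R S a i) y)^2)
      = (\<Sum>p\<in>UNIV. (2 / vol R) * (\<Sum>m\<in>S. u p m * cos (theta R m y))^2)" for y
    using pairs[of "\<lambda>p. (2 / vol R) * (\<Sum>m\<in>S. u p m * cos (theta R m y))^2"] by simp
  then have integrand:
    "(\<lambda>y. -(1/4) * (\<Sum>i\<in>UNIV. \<Sum>j\<in>UNIV. (pd i (odd_field R S a j) y - pd j (odd_field R S a i) y)^2))
      = (\<lambda>y. (- 1 / (2 * vol R)) * (\<Sum>p\<in>UNIV. (\<Sum>m\<in>S. u p m * cos (theta R m y))^2))"
    by (simp add: fun_eq_iff flip: sum_distrib_left sum_divide_distrib)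
  have "((\<lambda>y. (- 1 / (2 * vol R)) * (\<Sum>p\<in>UNIV. (\<Sum>m\<in>S. u p m * cos (theta R m y))^2)) has_integral
      (- 1 / (2 * vol R)) * (vol R / 2 * (\<Sum>m\<in>S. \<Sum>p\<in>UNIV. (u p m)^2))) (cbox 0 R)"
    using \<open>0 \<notin> S\<close>
    by (intro has_integral_mult_right has_integral_sum_power2_sum_orthogonal \<open>finite S\<close> finite_UNIV
        has_integral_cos_theta_mult Rpos) auto
  moreover have "(\<Sum>p\<in>UNIV. (u p m)^2) = 2 * (a m \<bullet> (mass_matrix (kk_v R m) *v a m))" for m
    using lagrange_identity_cart[of "a m" "kk_v R m"]
    by (simp add: u_def pairs[symmetric] inner_mass_matrix sqnorm_eq_inner inner_commute)
  ultimately show ?thesis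
    using vol unfolding scalar_quad_def integrand by (simp add: integral_unique sum_distrib_left)
qed

section \<open>Kaluza-Klein momenta and towers\<close>

lemma kk_v_nonzero:
  assumes "\<forall>i. R$i > 0" and "m \<noteq> 0"
  shows "kk_v R m \<noteq> 0"
proof -
  obtain i where "m $ i \<noteq> 0"
    using \<open>m \<noteq> 0\<close> by (auto simp: vec_eq_iff)
  moreover have "R $ i \<noteq> 0"
    using assms(1) by (metis less_irrefl)
  ultimately have "kk_v R m $ i \<noteq> 0"
    by (simp add: kk_v_def)
  then show ?thesis
    by (metis zero_index)
qed

lemma sqnorm_kk_v: "sqnorm (kk_v R m) = (\<Sum>i\<in>UNIV. (2 * pi * real (m$i) / R$i)^2)"
  by (simp add: sqnorm_def kk_v_def)

lemma card_nonempty_subsets: "card {T::'n::finite set. T \<noteq> {}} = 2 ^ CARD('n) - 1"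
proof -
  have "{T::'n set. T \<noteq> {}} = Pow UNIV - {{}}"
    by auto
  then show ?thesis
    by (simp add: card_Diff_singleton card_Pow)
qed

lemma mem_tower_iff: "m \<in> tower T \<longleftrightarrow> T = {i. m$i \<noteq> 0}"
  by (auto simp: tower_def)

lemma ex1_tower_iff: "m \<noteq> 0 \<longleftrightarrow> (\<exists>!T. T \<noteq> {} \<and> m \<in> tower T)"
proof -
  have "m \<noteq> 0 \<longleftrightarrow> {i. m$i \<noteq> 0} \<noteq> {}"
    by (simp add: vec_eq_iff)
  then show ?thesis
    by (simp add: mem_tower_iff Ex1_def)
qed

lemma tower_nonempty:
  assumes "T \<noteq> {}"
  shows "tower T \<noteq> {}"
proof -
  have "(\<chi> i. if i \<in> T then 1 else (0::nat)) \<in> tower T"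
    by (simp add: mem_tower_iff)
  then show ?thesis
    by blast
qed

theorem mainTheorem2:
  fixes R :: "real^'n"
  assumes Rpos: "\<forall>i. R$i > 0"
  shows
    "(\<forall>S b0 b. finite S \<and> 0 \<notin> S \<longrightarrow>
        vector_quad R b0 S b = (1/2) * (\<Sum>m\<in>S. sqnorm (kk_v R m) * (b m)^2))
   \<and> (\<forall>S a. finite S \<and> 0 \<notin> S \<longrightarrow>
        scalar_quad R S a = -(1/2) * (\<Sum>m\<in>S. a m \<bullet> (mass_matrix (kk_v R m) *v a m)))
   \<and> (\<forall>m::nat^'n. m \<noteq> 0 \<longrightarrow>
        (let v = kk_v R m; M = mass_matrix v in
           sqnorm v = (\<Sum>i\<in>UNIV. (2 * pi * real (m$i) / R$i)^2)
         \<and> sqnorm v > 0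
         \<and> transpose M = M
         \<and> M *v v = 0
         \<and> eigenspace M 0 = span {v}
         \<and> dim (eigenspace M 0) = 1
         \<and> dim (eigenspace M (sqnorm v)) = CARD('n) - 1
         \<and> (\<forall>t. det (t *\<^sub>R mat 1 - M) = t * (t - sqnorm v) ^ (CARD('n) - 1))))
   \<and> sqnorm (kk_v R 0) = 0
   \<and> card {T::'n set. T \<noteq> {}} = 2 ^ CARD('n) - 1
   \<and> (\<forall>m::nat^'n. m \<noteq> 0 \<longleftrightarrow> (\<exists>!T. T \<noteq> {} \<and> m \<in> tower T))
   \<and> (\<forall>T::'n set. T \<noteq> {} \<longrightarrow> tower T \<noteq> {})
   \<and> card {T::'n set. T \<noteq> {}} * (CARD('n) - 1) = (2 ^ CARD('n) - 1) * (CARD('n) - 1)"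
proof -
  have "sqnorm (kk_v R 0) = 0"
    by (simp add: sqnorm_kk_v)
  then show ?thesis
    using kk_v_nonzero[OF Rpos] vector_quad_eq[OF Rpos] scalar_quad_eq[OF Rpos]
    by (simp add: Let_def sqnorm_kk_v[symmetric] sqnorm_pos_iff transpose_mass_matrix
        mass_matrix_mult_self eigenspace_mass_matrix_0 dim_eigenspace_mass_matrix_0
        dim_eigenspace_mass_matrix_sqnorm charpoly_mass_matrix card_nonempty_subsets ex1_tower_iff
        tower_nonempty)
qed

end
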